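(* Let $X$ be a bounded chain and $H\colon X^*\to X\cup\{\varepsilon\}$ an $\varepsilon$-standard operation. The following are equivalent. (i) (a) $H$ is associative; (b) $H_2(H_1(x),H_1(x))=H_1(x)$ for every $x\in X$; (c) $H_1$ and $H_2$ are nondecreasing in each argument; (d) the sets $H_1(X)$, $H_2(X,z)=\{H_2(x,z):x\in X\}$ and $H_2(z,X)=\{H_2(z,x):x\in X\}$ are convex for every $z\in X$. (ii) (a) $H$ is associative; (b) $H$ is range-idempotent; (c) for every $n\geqslant 1$, $H_n$ is nondecreasing in each argument; (d) for every $n\geqslant 1$, every $0\leqslant i\leqslant n-1$, every $\mathbf{y}\in X^i$ and $\mathbf{z}\in X^{n-1-i}$, the set $\{H_n(\mathbf{y},x,\mathbf{z}):x\in X\}$ is convex. (iii) There exist $a,b,c,d\in X$ with $a\leqslant c\wedge d$ and $c\vee d\leqslant b$ such that for every $n\geqslant 1$, $$H_n(x_1,\ldots,x_n)=\mathrm{med}\Big(a,\,(c\wedge x_1)\vee\mathrm{med}\Big(\bigwedge_{i=1}^n x_i,\,c\wedge d,\,\bigvee_{i=1}^n x_i\Big)\vee(d\wedge x_n),\,b\Big).$$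
   Context: $X^*=\bigcup_{n\geqslant 0}X^n$ is the set of finite tuples over $X$, $X^0=\{\varepsilon\}$ with $\varepsilon\notin X$ the empty tuple; $H(\mathbf{x},\mathbf{y})$ denotes $H$ applied to the concatenation, concatenation with $\varepsilon$ leaving tuples unchanged. $H_n=H|_{X^n}$, $H^{\flat}=H|_{X^*\setminus\{\varepsilon\}}$. $H$ is $\varepsilon$-standard if $H(\varepsilon)=\varepsilon$ and $H(\mathbf{x})\neq\varepsilon$ for $\mathbf{x}\neq\varepsilon$. $H$ is associative if $H(\mathbf{x},\mathbf{y},\mathbf{z})=H(\mathbf{x},H(\mathbf{y}),\mathbf{z})$ for all tuples (a value $\varepsilon$ treated as the empty tuple). $H$ is range-idempotent if $H(x,\ldots,x)=x$ ($k$ copies) for every $x\in\mathrm{ran}(H^{\flat})$ and every $k\geqslant 1$. In the chain $X$, $\wedge$ and $\vee$ denote min and max, and $\mathrm{med}(x,y,z)=(x\vee y)\wedge(y\vee z)\wedge(z\vee x)$. A subset $S$ of a chain is convex if $s,s'\in S$ and $s<t<s'$ imply $t\in S$. *)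

theory Defs
  imports Main
begin

text \<open>Tuples over X are lists; the value epsilon is None, so an operation
  H : X* -> X + {eps} is a function 'a list => 'a option.\<close>

definition opt_list :: "'a option \<Rightarrow> 'a list" where
  "opt_list v = (case v of None \<Rightarrow> [] | Some a \<Rightarrow> [a])"

definition eps_standard :: "('a list \<Rightarrow> 'a option) \<Rightarrow> bool" where
  "eps_standard H \<longleftrightarrow> H [] = None \<and> (\<forall>xs. xs \<noteq> [] \<longrightarrow> H xs \<noteq> None)"

definition associative_op :: "('a list \<Rightarrow> 'a option) \<Rightarrow> bool" where
  "associative_op H \<longleftrightarrow>
     (\<forall>xs ys zs. H (xs @ ys @ zs) = H (xs @ opt_list (H ys) @ zs))"

definition range_idempotent :: "('a list \<Rightarrow> 'a option) \<Rightarrow> bool" where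
  "range_idempotent H \<longleftrightarrow>
     (\<forall>x \<in> {v. \<exists>xs. xs \<noteq> [] \<and> H xs = Some v}. \<forall>k\<ge>1. H (replicate k x) = Some x)"

text \<open>H_n nondecreasing in each argument (values compared in X; for an
  eps-standard H all values on nonempty tuples lie in X).\<close>
definition nondecr_n :: "('a::linorder list \<Rightarrow> 'a option) \<Rightarrow> nat \<Rightarrow> bool" where
  "nondecr_n H n \<longleftrightarrow>
     (\<forall>ys zs x x'. length ys + 1 + length zs = n \<longrightarrow> x \<le> x' \<longrightarrow>
        the (H (ys @ [x] @ zs)) \<le> the (H (ys @ [x'] @ zs)))"

definition chain_convex :: "'a::linorder set \<Rightarrow> bool" where
  "chain_convex S \<longleftrightarrow> (\<forall>s\<in>S. \<forall>s'\<in>S. \<forall>t. s < t \<and> t < s' \<longrightarrow> t \<in> S)"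

definition med :: "'a::linorder \<Rightarrow> 'a \<Rightarrow> 'a \<Rightarrow> 'a" where
  "med x y z = min (min (max x y) (max y z)) (max z x)"

end

theory Submission
  imports Defs
begin

text \<open>
  The operation of (iii) satisfies med_op (xs @ [y]) = med_op [med_op xs, y], an identity in
  the chain; hence it is associative, and the other properties of (ii) are read off the formula. The unary part H_1 is a monotone idempotent map with convex range,
  hence the clamp x \<mapsto> med a x b with a = H_1 \<bottom> and b = H_1 \<top>. The binary part
  F = H_2 is monotone, associative, idempotent on [a, b] and has convex sections; for e = F a b,
  convexity makes a a left unit on [a, e] and b a right unit on [e, b], which forces
  F u v = med u e v for u \<le> v, and symmetrically F v u = med u (F b a) v. An associative H is
  determined by H_1 and H_2, so H is the operation of (iii) with c = F b a and d = F a b.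
  Finally, (ii) \<Longrightarrow> (i) is a specialization.
\<close>

lemma med_same [simp]: "med x y x = (x::'a::linorder)"
  by (auto simp: med_def min_def max_def)

lemma med_clamp: "(a::'a::linorder) \<le> b \<Longrightarrow> med a x b = max a (min x b)"
  by (auto simp: med_def min_def max_def)

lemma med_eq_self_iff: "(a::'a::linorder) \<le> b \<Longrightarrow> med a x b = x \<longleftrightarrow> a \<le> x \<and> x \<le> b"
  by (auto simp: med_def min_def max_def)

lemma med_bot_top:
  fixes a b :: "'a::{linorder,order_bot,order_top}"
  assumes "a \<le> b"
  shows "med a bot b = a" "med a top b = b"
  using assms by (auto simp: med_def min_def max_def bot_unique top_unique)

lemma med_mono: "x \<le> x' \<Longrightarrow> y \<le> y' \<Longrightarrow> z \<le> z' \<Longrightarrow> med x y z \<le> med x' y' (z'::'a::linorder)"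
  unfolding med_def by (intro min.mono max.mono)

section \<open>The operation of condition (iii)\<close>

definition med_op :: "'a::linorder \<Rightarrow> 'a \<Rightarrow> 'a \<Rightarrow> 'a \<Rightarrow> 'a list \<Rightarrow> 'a" where
  "med_op a b c d xs =
     med a (max (max (min c (hd xs)) (med (Min (set xs)) (min c d) (Max (set xs))))
                (min d (last xs))) b"

lemma med_op_singleton [simp]: "med_op a b c d [x] = med a x b"
  by (simp add: med_op_def)

lemma med_op_pair:
  "med_op a b c d [x, y] =
     med a (max (max (min c x) (med (min x y) (min c d) (max x y))) (min d y)) b"
  by (simp add: med_op_def)

lemma med_op_rev: "xs \<noteq> [] \<Longrightarrow> med_op a b c d (rev xs) = med_op a b d c xs"
  by (simp add: med_op_def hd_rev last_rev min.commute max.commute max.left_commute)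

lemma med_op_bounded: "a \<le> b \<Longrightarrow> med a (med_op a b c d xs) b = med_op a b c d xs"
  by (simp add: med_op_def med_clamp)

lemma med_op_replicate: "k \<ge> 1 \<Longrightarrow> med_op a b c d (replicate k x) = med a x b"
  by (simp add: med_op_def)

lemma med_op_mono:
  assumes "x \<le> x'"
  shows "med_op a b c d (ys @ [x] @ zs) \<le> med_op a b c d (ys @ [x'] @ zs)"
proof -
  have "hd (ys @ [x] @ zs) \<le> hd (ys @ [x'] @ zs)"
    using assms by (cases ys) auto
  moreover have "last (ys @ [x] @ zs) \<le> last (ys @ [x'] @ zs)"
    using assms by (cases zs rule: rev_cases) auto
  moreover have "Min (set (ys @ [x] @ zs)) \<le> Min (set (ys @ [x'] @ zs))"
    using assms by (auto intro: Min.coboundedI order_trans)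
  moreover have "Max (set (ys @ [x] @ zs)) \<le> Max (set (ys @ [x'] @ zs))"
    using assms by (auto intro: Max.coboundedI order_trans)
  ultimately show ?thesis
    unfolding med_op_def by (intro med_mono max.mono min.mono order_refl)
qed

lemma med_op_pair_closed_form:
  fixes a b c d x y :: "'a::linorder"
  assumes "a \<le> min c d" "max c d \<le> b"
  shows "med_op a b c d [x, y] =
    (let u = med a x b; v = med a y b in if u \<le> v then med u d v else med v c u)"
  using assms unfolding med_op_pair med_def Let_def
  by (smt (z3) min_def max_def order_trans linear order_antisym)

lemma med_op_pair_clamp_right:
  fixes a b c d x y :: "'a::linorder"
  assumes "a \<le> min c d" "max c d \<le> b"
  shows "med_op a b c d [x, med a y b] = med_op a b c d [x, y]"
  using assms unfolding med_op_pair med_def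
  by (smt (z3) min_def max_def order_trans linear order_antisym)

lemma med_op_pair_fixed_right:
  fixes a b c d p t :: "'a::{linorder,order_bot,order_top}"
  assumes "a \<le> min c d" "max c d \<le> b"
    and "med_op a b c d [p, bot] \<le> t" "t \<le> med_op a b c d [p, top]"
  shows "med_op a b c d [p, t] = t"
  using assms unfolding med_op_pair med_def
  by (smt (z3) min_def max_def order_trans linear order_antisym bot_least top_greatest)

(* h, l, m, M stand for the head, last element, minimum and maximum of a nonempty list. *)
lemma med_op_snoc_identity:
  fixes a b c d h l m M u y :: "'a::linorder"
  assumes "a \<le> c" "a \<le> d" "c \<le> b" "d \<le> b" "m \<le> h" "h \<le> M" "m \<le> l" "l \<le> M"
    and "u = med a (max (max (min c h) (med m (min c d) M)) (min d l)) b"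
  shows "med a (max (max (min c h) (med (min m y) (min c d) (max M y))) (min d y)) b =
    med a (max (max (min c u) (med (min u y) (min c d) (max u y))) (min d y)) b"
  using assms unfolding med_def
  by (smt (z3) min_def max_def order_trans linear order_antisym)

lemma med_op_snoc:
  fixes a b c d y :: "'a::linorder"
  assumes "a \<le> min c d" "max c d \<le> b" "xs \<noteq> []"
  shows "med_op a b c d (xs @ [y]) = med_op a b c d [med_op a b c d xs, y]"
proof -
  have "Min (set (xs @ [y])) = min (Min (set xs)) y" "Max (set (xs @ [y])) = max (Max (set xs)) y"
    using assms(3) by (simp_all add: min.commute max.commute)
  then have "med_op a b c d (xs @ [y]) =
      med a (max (max (min c (hd xs)) (med (min (Min (set xs)) y) (min c d) (max (Max (set xs)) y)))
        (min d y)) b"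
    using assms(3) by (simp add: med_op_def)
  also have "\<dots> = med_op a b c d [med_op a b c d xs, y]"
    unfolding med_op_pair
    by (rule med_op_snoc_identity) (use assms in \<open>simp_all add: med_op_def\<close>)
  finally show ?thesis .
qed

lemma med_op_Cons:
  fixes a b c d x :: "'a::linorder"
  assumes "a \<le> min c d" "max c d \<le> b" "ys \<noteq> []"
  shows "med_op a b c d (x # ys) = med_op a b c d [x, med_op a b c d ys]"
proof -
  have swapped: "a \<le> min d c" "max d c \<le> b"
    using assms(1,2) by (simp_all add: min.commute max.commute)
  have "med_op a b c d (x # ys) = med_op a b d c (rev ys @ [x])"
    using med_op_rev[of "x # ys" a b d c] by simp
  also have "\<dots> = med_op a b d c [med_op a b c d ys, x]"
    using med_op_snoc[OF swapped, of "rev ys" x] med_op_rev[of ys a b d c] assms(3) by simp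
  also have "\<dots> = med_op a b c d [x, med_op a b c d ys]"
    using med_op_rev[of "[x, med_op a b c d ys]" a b d c] by simp
  finally show ?thesis .
qed

lemma med_op_pair_assoc:
  fixes a b c d x y z :: "'a::linorder"
  assumes "a \<le> min c d" "max c d \<le> b"
  shows "med_op a b c d [med_op a b c d [x, y], z] = med_op a b c d [x, med_op a b c d [y, z]]"
  using med_op_snoc[OF assms, of "[x, y]" z] med_op_Cons[OF assms, of "[y, z]" x] by simp

lemma med_op_append:
  fixes a b c d :: "'a::linorder"
  assumes "a \<le> min c d" "max c d \<le> b" "xs \<noteq> []" "ys \<noteq> []"
  shows "med_op a b c d (xs @ ys) = med_op a b c d [med_op a b c d xs, med_op a b c d ys]"
  using assms(4)
proof (induction ys rule: rev_induct)
  case Nil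
  then show ?case by simp
next
  case (snoc y ys)
  show ?case
  proof (cases "ys = []")
    case True
    then show ?thesis
      using med_op_snoc[OF assms(1-3)] med_op_pair_clamp_right[OF assms(1,2)] by simp
  next
    case False
    then show ?thesis
      using med_op_snoc[OF assms(1,2)] snoc.IH med_op_pair_assoc[OF assms(1,2)] assms(3)
      by (metis append_assoc append_is_Nil_conv)
  qed
qed

lemma med_op_append_right:
  fixes a b c d :: "'a::linorder"
  assumes "a \<le> min c d" "max c d \<le> b" "ys \<noteq> []"
  shows "med_op a b c d (xs @ ys) = med_op a b c d (xs @ [med_op a b c d ys])"
proof -
  have "a \<le> b" using assms(1,2) by (meson min.boundedE max.boundedE order_trans)
  then show ?thesis
    using med_op_append[OF assms(1,2) _ assms(3), of xs] med_op_append[OF assms(1,2), of xs]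
    by (cases "xs = []") (simp_all add: med_op_bounded)
qed

lemma med_op_snoc_fixed:
  fixes a b c d t :: "'a::{linorder,order_bot,order_top}"
  assumes "a \<le> min c d" "max c d \<le> b"
    and "med_op a b c d (ys @ [bot]) \<le> t" "t \<le> med_op a b c d (ys @ [top])"
  shows "med_op a b c d (ys @ [t]) = t"
proof (cases "ys = []")
  case True
  have "a \<le> b" using assms(1,2) by (meson min.boundedE max.boundedE order_trans)
  with True assms(3,4) show ?thesis by (simp add: med_bot_top med_clamp)
next
  case False
  then show ?thesis
    using assms med_op_snoc[OF assms(1,2) False] med_op_pair_fixed_right[OF assms(1,2)] by simp
qed

lemma med_op_Cons_fixed:
  fixes a b c d t :: "'a::{linorder,order_bot,order_top}"
  assumes "a \<le> min c d" "max c d \<le> b"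
    and "med_op a b c d (bot # zs) \<le> t" "t \<le> med_op a b c d (top # zs)"
  shows "med_op a b c d (t # zs) = t"
proof -
  have "a \<le> min d c" "max d c \<le> b"
    using assms by (simp_all add: min.commute max.commute)
  moreover have "med_op a b c d (x # zs) = med_op a b d c (rev zs @ [x])" for x
    using med_op_rev[of "x # zs" a b d c] by simp
  ultimately show ?thesis
    using assms(3,4) med_op_snoc_fixed by metis
qed

section \<open>Convex subsets of a chain\<close>

lemma chain_convexD:
  "chain_convex S \<Longrightarrow> s \<in> S \<Longrightarrow> s' \<in> S \<Longrightarrow> s \<le> t \<Longrightarrow> t \<le> s' \<Longrightarrow> t \<in> S"
  unfolding chain_convex_def by (metis order.order_iff_strict)

lemma chain_convex_UNIV [simp]: "chain_convex UNIV"
  by (simp add: chain_convex_def)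

lemma chain_convex_mono_image:
  fixes g :: "'a::{linorder,order_bot,order_top} \<Rightarrow> 'a"
  assumes "mono g" and fixed: "\<And>t. g bot \<le> t \<Longrightarrow> t \<le> g top \<Longrightarrow> g t = t"
    and "chain_convex S"
  shows "chain_convex (g ` S)"
  unfolding chain_convex_def
proof (intro ballI allI impI)
  fix s s' t
  assume "s \<in> g ` S" "s' \<in> g ` S" and t: "s < t \<and> t < s'"
  then obtain x x' where x: "x \<in> S" "s = g x" and x': "x' \<in> S" "s' = g x'"
    by auto
  have "g bot \<le> s" "s' \<le> g top"
    using x x' \<open>mono g\<close> by (simp_all add: monoD)
  with t have gt: "g t = t"
    by (intro fixed) (auto dest: less_imp_le intro: order_trans)
  have "x \<le> t"
    using \<open>mono g\<close> gt x t by (metis leD monoD nle_le)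
  moreover have "t \<le> x'"
    using \<open>mono g\<close> gt x' t by (metis leD monoD nle_le)
  ultimately have "t \<in> S"
    using x x' \<open>chain_convex S\<close> by (blast intro: chain_convexD)
  with gt show "t \<in> g ` S"
    by (metis image_eqI)
qed

lemma chain_convex_med_op_section:
  fixes a b c d :: "'a::{linorder,order_bot,order_top}"
  assumes "a \<le> min c d" "max c d \<le> b"
  shows "chain_convex (range (\<lambda>x. med_op a b c d (ys @ [x] @ zs)))"
proof -
  have "range (\<lambda>x. med_op a b c d (ys @ [x] @ zs)) =
      (\<lambda>s. med_op a b c d (ys @ [s])) ` range (\<lambda>x. med_op a b c d (x # zs))"
    using med_op_append_right[OF assms, of "_ # zs" ys] by (simp add: image_image)
  moreover have "chain_convex (range (\<lambda>x. med_op a b c d (x # zs)))"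
    using med_op_mono[of _ _ a b c d "[]" zs] med_op_Cons_fixed[OF assms]
    by (intro chain_convex_mono_image) (auto intro: monoI)
  ultimately show ?thesis
    using med_op_mono[of _ _ a b c d ys "[]"] med_op_snoc_fixed[OF assms]
    by (auto intro!: chain_convex_mono_image monoI)
qed

lemma idem_convex_range_fixpoint:
  fixes g :: "'a::linorder \<Rightarrow> 'a"
  assumes idem: "\<And>x. g (g x) = g x" and convex: "chain_convex (range g)"
    and "g x \<le> t" "t \<le> g y"
  shows "g t = t"
proof -
  obtain s where "t = g s"
    using chain_convexD[OF convex _ _ assms(3,4)] by auto
  with idem show ?thesis
    by simp
qed

lemma mono_retraction_eq_med:
  fixes G :: "'a::{linorder,order_bot,order_top} \<Rightarrow> 'a"
  assumes "mono G" and idem: "\<And>x. G (G x) = G x" and convex: "chain_convex (range G)"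
  shows "G x = med (G bot) x (G top)"
proof -
  have fixed: "G t = t" if "G bot \<le> t" "t \<le> G top" for t
    using idem_convex_range_fixpoint[OF idem convex that] .
  have "G bot \<le> G x" "G x \<le> G top" "G bot \<le> G top"
    using \<open>mono G\<close> by (simp_all add: monoD)
  moreover have "G x \<le> G bot" if "x \<le> G bot"
    using monoD[OF \<open>mono G\<close> that] fixed[of "G bot"] \<open>G bot \<le> G top\<close> by simp
  moreover have "G top \<le> G x" if "G top \<le> x"
    using monoD[OF \<open>mono G\<close> that] fixed[of "G top"] \<open>G bot \<le> G top\<close> by simp
  ultimately show ?thesis
    using fixed[of x] by (auto simp: med_def min_def max_def)
qed

section \<open>Monotone associative binary operations\<close>

lemma assoc_op_units:
  fixes F :: "'a::linorder \<Rightarrow> 'a \<Rightarrow> 'a"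
  assumes assoc: "\<And>x y z. F (F x y) z = F x (F y z)" and "F a a = a" "F b b = b"
    and convex_left: "chain_convex (range (F a))"
    and convex_right: "chain_convex (range (\<lambda>x. F x b))"
  shows "a \<le> y \<Longrightarrow> y \<le> F a b \<Longrightarrow> F a y = y"
    and "F a b \<le> x \<Longrightarrow> x \<le> b \<Longrightarrow> F x b = x"
proof -
  show "F a y = y" if "a \<le> y" "y \<le> F a b"
  proof (rule idem_convex_range_fixpoint[where x = a and y = b, OF _ convex_left])
    show "F a (F a t) = F a t" for t
      using assoc[of a a t] \<open>F a a = a\<close> by simp
  qed (use that \<open>F a a = a\<close> in simp_all)
  show "F x b = x" if "F a b \<le> x" "x \<le> b"
  proof (rule idem_convex_range_fixpoint[where g = "\<lambda>x. F x b" and x = a and y = b, OF _ convex_right])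
    show "F (F t b) b = F t b" for t
      using assoc[of t b b] \<open>F b b = b\<close> by simp
  qed (use that \<open>F b b = b\<close> in simp_all)
qed

lemma mono_assoc_op_eq_med:
  fixes F :: "'a::linorder \<Rightarrow> 'a \<Rightarrow> 'a"
  assumes "a \<le> b"
    and mono: "\<And>x x' y y'. x \<le> x' \<Longrightarrow> y \<le> y' \<Longrightarrow> F x y \<le> F x' y'"
    and bounded: "\<And>x y. a \<le> F x y \<and> F x y \<le> b"
    and assoc: "\<And>x y z. F (F x y) z = F x (F y z)"
    and idem: "\<And>x. a \<le> x \<Longrightarrow> x \<le> b \<Longrightarrow> F x x = x"
    and convex_left: "chain_convex (range (F a))"
    and convex_right: "chain_convex (range (\<lambda>x. F x b))"
    and uv: "a \<le> u" "u \<le> v" "v \<le> b"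
  shows "F u v = med u (F a b) v"
proof -
  have "F a a = a" "F b b = b"
    using idem \<open>a \<le> b\<close> by simp_all
  note units = assoc_op_units[OF assoc this convex_left convex_right]
  consider "v \<le> F a b" | "F a b \<le> u" | "u < F a b" "F a b < v"
    by fastforce
  then show ?thesis
  proof cases
    case 1
    have "v = F a v" using units(1) 1 uv by simp
    also have "\<dots> \<le> F u v" using mono uv by simp
    finally have "v \<le> F u v" .
    moreover have "F u v \<le> F v v" using mono uv by simp
    ultimately show ?thesis
      using 1 uv idem[of v] by (auto simp: med_def min_def max_def)
  next
    case 2
    have "F u v \<le> F u b" using mono uv by simp
    also have "\<dots> = u" using units(2) 2 uv by simp
    finally have "F u v \<le> u" .
    moreover have "F u u \<le> F u v" using mono uv by simp
    ultimately show ?thesis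
      using 2 uv idem[of u] by (auto simp: med_def min_def max_def)
  next
    case 3
    have "F u v = F a (F u v)" using units(1)[of u] 3 uv assoc[of a u v] by simp
    also have "\<dots> \<le> F a b" using mono bounded by simp
    finally have "F u v \<le> F a b" .
    moreover have "F a b \<le> F (F u v) b" using mono bounded by simp
    moreover have "\<dots> = F u v" using units(2)[of v] 3 uv assoc[of u v b] by simp
    ultimately show ?thesis
      using 3 by (auto simp: med_def min_def max_def)
  qed
qed

lemma mono_assoc_op_eq_med_op:
  fixes F :: "'a::linorder \<Rightarrow> 'a \<Rightarrow> 'a"
  assumes "a \<le> b"
    and mono: "\<And>x x' y y'. x \<le> x' \<Longrightarrow> y \<le> y' \<Longrightarrow> F x y \<le> F x' y'"
    and bounded: "\<And>x y. a \<le> F x y \<and> F x y \<le> b"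
    and assoc: "\<And>x y z. F (F x y) z = F x (F y z)"
    and idem: "\<And>x. a \<le> x \<Longrightarrow> x \<le> b \<Longrightarrow> F x x = x"
    and clamp: "\<And>x y. F (med a x b) (med a y b) = F x y"
    and convex_left: "\<And>z. chain_convex (range (F z))"
    and convex_right: "\<And>z. chain_convex (range (\<lambda>x. F x z))"
  shows "F x y = med_op a b (F b a) (F a b) [x, y]"
proof -
  have forward: "F u v = med u (F a b) v" if "a \<le> u" "u \<le> v" "v \<le> b" for u v
    using mono_assoc_op_eq_med[OF assms(1) mono bounded assoc idem convex_left convex_right that] .
  have backward: "F v u = med u (F b a) v" if "a \<le> u" "u \<le> v" "v \<le> b" for u v
  proof (rule mono_assoc_op_eq_med[of a b "\<lambda>x y. F y x", OF assms(1) _ _ _ _ _ _ that])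
    show "F y x \<le> F y' x'" if "x \<le> x'" "y \<le> y'" for x x' y y'
      using mono that by simp
    show "F z (F y x) = F (F z y) x" for x y z
      using assoc by simp
  qed (use bounded idem convex_left convex_right in simp_all)
  define u v where "u = med a x b" and "v = med a y b"
  have "a \<le> u" "u \<le> b" "a \<le> v" "v \<le> b"
    using \<open>a \<le> b\<close> by (simp_all add: u_def v_def med_clamp)
  then have "F x y = (if u \<le> v then med u (F a b) v else med v (F b a) u)"
    using forward[of u v] backward[of v u] clamp[of x y] by (simp add: u_def v_def)
  also have "\<dots> = med_op a b (F b a) (F a b) [x, y]"
    using bounded by (simp add: med_op_pair_closed_form u_def v_def)
  finally show ?thesis .
qed

section \<open>Associative \<open>\<epsilon>\<close>-standard operations\<close>

lemma opt_list_Some [simp]: "opt_list (Some x) = [x]"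
  by (simp add: opt_list_def)

lemma eps_standard_Some: "eps_standard H \<Longrightarrow> xs \<noteq> [] \<Longrightarrow> H xs = Some (the (H xs))"
  unfolding eps_standard_def by auto

lemma associative_opI:
  assumes eps: "eps_standard H"
    and append: "\<And>xs ys. xs \<noteq> [] \<Longrightarrow> ys \<noteq> [] \<Longrightarrow> H (xs @ ys) = H [the (H xs), the (H ys)]"
    and singleton: "\<And>xs. xs \<noteq> [] \<Longrightarrow> H [the (H xs)] = H xs"
  shows "associative_op H"
  unfolding associative_op_def
proof (intro allI)
  fix xs ys zs :: "'a list"
  have congruence: "H (xs @ ys @ zs) = H (xs @ ys' @ zs)"
    if "ys \<noteq> []" "ys' \<noteq> []" "H ys = H ys'" for ys ys'
  proof -
    have "H (ys @ zs) = H (ys' @ zs)"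
      using append that by (cases "zs = []") simp_all
    then show ?thesis
      using append that by (cases "xs = []") simp_all
  qed
  show "H (xs @ ys @ zs) = H (xs @ opt_list (H ys) @ zs)"
  proof (cases "ys = []")
    case True
    with eps show ?thesis by (simp add: eps_standard_def opt_list_def)
  next
    case False
    then have "opt_list (H ys) = [the (H ys)]"
      using eps_standard_Some[OF eps] by (metis opt_list_Some)
    with False show ?thesis
      using congruence[of ys "[the (H ys)]"] singleton by simp
  qed
qed

lemma associative_opD:
  assumes "eps_standard H" "associative_op H" "ys \<noteq> []"
  shows "H (xs @ ys @ zs) = H (xs @ [the (H ys)] @ zs)"
  using assms unfolding associative_op_def by (metis eps_standard_Some opt_list_Some)

lemma associative_op_determined:
  assumes eps: "eps_standard H" and assoc: "associative_op H"
    and single: "\<And>x. H [x] = Some (f [x])" and pair: "\<And>x y. H [x, y] = Some (f [x, y])"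
    and f_snoc: "\<And>xs y. xs \<noteq> [] \<Longrightarrow> f (xs @ [y]) = f [f xs, y]"
    and "xs \<noteq> []"
  shows "H xs = Some (f xs)"
  using \<open>xs \<noteq> []\<close>
proof (induction xs rule: rev_induct)
  case (snoc y xs)
  show ?case
  proof (cases "xs = []")
    case True
    with single show ?thesis by simp
  next
    case False
    then have "H (xs @ [y]) = H [f xs, y]"
      using associative_opD[OF eps assoc False, of "[]" "[y]"] snoc.IH by simp
    with False show ?thesis by (simp add: pair f_snoc)
  qed
qed simp

lemma all_length_ge_1_iff:
  "(\<forall>n\<ge>1. \<forall>xs. length xs = n \<longrightarrow> P xs) \<longleftrightarrow> (\<forall>xs. xs \<noteq> [] \<longrightarrow> P xs)"
  by (auto simp: Suc_le_eq)

lemma nondecr_nD: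
  "nondecr_n H n \<Longrightarrow> length ys + 1 + length zs = n \<Longrightarrow> x \<le> x' \<Longrightarrow>
    the (H (ys @ [x] @ zs)) \<le> the (H (ys @ [x'] @ zs))"
  unfolding nondecr_n_def by blast

lemma associative_op_unary_eq_med:
  fixes H :: "'a::{linorder,order_bot,order_top} list \<Rightarrow> 'a option"
  assumes eps: "eps_standard H" and assoc: "associative_op H" and mono1: "nondecr_n H 1"
    and convex1: "chain_convex (range (\<lambda>x. the (H [x])))"
  shows "the (H [x]) = med (the (H [bot])) x (the (H [top]))"
proof -
  define G where "G x = the (H [x])" for x
  have "G (G x) = G x" for x
    using associative_opD[OF eps assoc, of "[x]" "[]" "[]", symmetric] by (simp add: G_def)
  moreover have "mono G"
    using nondecr_nD[OF mono1, of "[]" "[]"] by (intro monoI) (simp add: G_def)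
  moreover have "chain_convex (range G)"
    using convex1 by (simp add: G_def[abs_def])
  ultimately show ?thesis
    using mono_retraction_eq_med[of G x] by (simp add: G_def)
qed

lemma associative_op_binary_eq_med_op:
  fixes H :: "'a::{linorder,order_bot,order_top} list \<Rightarrow> 'a option"
  assumes eps: "eps_standard H" and assoc: "associative_op H"
    and square: "\<And>x. H (opt_list (H [x]) @ opt_list (H [x])) = H [x]"
    and mono2: "nondecr_n H 2"
    and convex2: "\<And>z. chain_convex (range (\<lambda>x. the (H [x, z])))"
      "\<And>z. chain_convex (range (\<lambda>x. the (H [z, x])))"
    and unary: "\<And>x. the (H [x]) = med a x b" and "a \<le> b"
  shows "the (H [x, y]) = med_op a b (the (H [b, a])) (the (H [a, b])) [x, y]"
proof -
  define F where "F x y = the (H [x, y])" for x y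
  note assocD = associative_opD[OF eps assoc]
  have F_clamp: "F (med a x b) (med a y b) = F x y" for x y
    using assocD[of "[x]" "[]" "[y]", symmetric] assocD[of "[y]" "[med a x b]" "[]", symmetric]
    by (simp add: F_def unary)
  have F_bounded: "a \<le> F x y \<and> F x y \<le> b" for x y
    using assocD[of "[x, y]" "[]" "[]", symmetric] unary[of "F x y", symmetric]
    by (simp add: F_def med_eq_self_iff \<open>a \<le> b\<close>)
  have F_assoc: "F (F x y) z = F x (F y z)" for x y z
    using assocD[of "[x, y]" "[]" "[z]", symmetric] assocD[of "[y, z]" "[x]" "[]", symmetric]
    by (simp add: F_def)
  have F_mono: "F x y \<le> F x' y'" if "x \<le> x'" "y \<le> y'" for x x' y y'
    using nondecr_nD[OF mono2, of "[]" "[y]" x x'] nondecr_nD[OF mono2, of "[x']" "[]" y y'] that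
    by (simp add: F_def)
  have F_idem: "F u u = u" if "a \<le> u" "u \<le> b" for u
  proof -
    have "the (H [u]) = u"
      using that by (simp add: unary med_eq_self_iff \<open>a \<le> b\<close>)
    with eps_standard_Some[OF eps, of "[u]"] have "H [u] = Some u"
      by simp
    with square[of u] show ?thesis
      by (simp add: F_def)
  qed
  show ?thesis
    unfolding F_def[symmetric]
    by (rule mono_assoc_op_eq_med_op[where F = F, OF \<open>a \<le> b\<close> F_mono F_bounded F_assoc F_idem F_clamp])
      (use convex2 in \<open>simp_all add: F_def[abs_def]\<close>)
qed

lemma med_op_representation:
  fixes H :: "'a::{linorder,order_bot,order_top} list \<Rightarrow> 'a option"
  assumes eps: "eps_standard H" and assoc: "associative_op H"
    and square: "\<And>x. H (opt_list (H [x]) @ opt_list (H [x])) = H [x]"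
    and mono1: "nondecr_n H 1" and mono2: "nondecr_n H 2"
    and convex1: "chain_convex (range (\<lambda>x. the (H [x])))"
    and convex2: "\<And>z. chain_convex (range (\<lambda>x. the (H [x, z])))"
      "\<And>z. chain_convex (range (\<lambda>x. the (H [z, x])))"
  obtains a b c d where "a \<le> min c d" "max c d \<le> b"
    "\<And>xs. xs \<noteq> [] \<Longrightarrow> H xs = Some (med_op a b c d xs)"
proof -
  define a b where "a = the (H [bot])" and "b = the (H [top])"
  have unary: "the (H [x]) = med a x b" for x
    unfolding a_def b_def by (rule associative_op_unary_eq_med[OF eps assoc mono1 convex1])
  have "a \<le> b"
    unfolding a_def b_def using nondecr_nD[OF mono1, of "[]" "[]"] by simp
  define c d where "c = the (H [b, a])" and "d = the (H [a, b])"
  have binary: "the (H [x, y]) = med_op a b c d [x, y]" for x y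
    unfolding c_def d_def
    by (rule associative_op_binary_eq_med_op[OF eps assoc square mono2 convex2 unary \<open>a \<le> b\<close>])
  have "c = med_op a b c d [b, a]" "d = med_op a b c d [a, b]"
    using binary[of b a] binary[of a b] by (simp_all only: c_def[symmetric] d_def[symmetric])
  then have "med a c b = c" "med a d b = d"
    using med_op_bounded[OF \<open>a \<le> b\<close>] by metis+
  then have bounds: "a \<le> min c d" "max c d \<le> b"
    by (simp_all add: med_eq_self_iff \<open>a \<le> b\<close>)
  show ?thesis
  proof (rule that[OF bounds])
    show "H xs = Some (med_op a b c d xs)" if "xs \<noteq> []" for xs
    proof (rule associative_op_determined[OF eps assoc _ _ med_op_snoc[OF bounds] that])
      show "H [x] = Some (med_op a b c d [x])" for x
        using eps_standard_Some[OF eps, of "[x]"] unary[of x] by simp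
      show "H [x, y] = Some (med_op a b c d [x, y])" for x y
        using eps_standard_Some[OF eps, of "[x, y]"] binary[of x y] by simp
    qed
  qed
qed

lemma med_op_operation_properties:
  fixes H :: "'a::{linorder,order_bot,order_top} list \<Rightarrow> 'a option"
  assumes eps: "eps_standard H" and bounds: "a \<le> min c d" "max c d \<le> b"
    and H: "\<And>xs. xs \<noteq> [] \<Longrightarrow> H xs = Some (med_op a b c d xs)"
  shows "associative_op H" "range_idempotent H" "nondecr_n H n"
    "chain_convex {the (H (ys @ [x] @ zs)) | x. True}"
proof -
  have "a \<le> b"
    using bounds by (meson min.boundedE max.boundedE order_trans)
  show "associative_op H"
    by (rule associative_opI[OF eps])
      (simp_all add: H med_op_append[OF bounds] med_op_bounded[OF \<open>a \<le> b\<close>])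
  show "range_idempotent H"
    unfolding range_idempotent_def
  proof (intro ballI allI impI)
    fix v and k :: nat
    assume "v \<in> {v. \<exists>xs. xs \<noteq> [] \<and> H xs = Some v}" "1 \<le> k"
    then obtain xs where "xs \<noteq> []" "v = med_op a b c d xs"
      using H by auto
    with \<open>1 \<le> k\<close> show "H (replicate k v) = Some v"
      using H med_op_replicate[OF \<open>1 \<le> k\<close>, of a b c d v] med_op_bounded[OF \<open>a \<le> b\<close>]
      by simp
  qed
  show "nondecr_n H n"
    unfolding nondecr_n_def by (simp add: H med_op_mono[simplified])
  show "chain_convex {the (H (ys @ [x] @ zs)) | x. True}"
    using chain_convex_med_op_section[OF bounds, of ys zs] H by (simp add: full_SetCompr_eq)
qed

lemma range_idempotent_square:
  assumes "eps_standard H" "range_idempotent H"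
  shows "H (opt_list (H [x]) @ opt_list (H [x])) = H [x]"
proof -
  obtain v where v: "H [x] = Some v"
    using assms(1) unfolding eps_standard_def by blast
  then have "v \<in> {v. \<exists>xs. xs \<noteq> [] \<and> H xs = Some v}"
    by blast
  then have "H (replicate 2 v) = Some v"
    using assms(2) unfolding range_idempotent_def by simp
  with v show ?thesis
    by (simp add: numeral_2_eq_2)
qed

theorem proposition5p7:
  fixes H :: "'a::{linorder, order_bot, order_top} list \<Rightarrow> 'a option"
  assumes "eps_standard H"
  shows "((associative_op H
           \<and> (\<forall>x. H (opt_list (H [x]) @ opt_list (H [x])) = H [x])
           \<and> nondecr_n H 1 \<and> nondecr_n H 2
           \<and> chain_convex {the (H [x]) | x. True}
           \<and> (\<forall>z. chain_convex {the (H [x, z]) | x. True}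
                 \<and> chain_convex {the (H [z, x]) | x. True}))
          \<longleftrightarrow>
          (associative_op H \<and> range_idempotent H
           \<and> (\<forall>n\<ge>1. nondecr_n H n)
           \<and> (\<forall>ys zs. chain_convex {the (H (ys @ [x] @ zs)) | x. True}))) \<and>
         ((associative_op H \<and> range_idempotent H
           \<and> (\<forall>n\<ge>1. nondecr_n H n)
           \<and> (\<forall>ys zs. chain_convex {the (H (ys @ [x] @ zs)) | x. True}))
          \<longleftrightarrow>
          (\<exists>a b c d. a \<le> min c d \<and> max c d \<le> b \<and>
             (\<forall>n\<ge>1. \<forall>xs. length xs = n \<longrightarrow>
                H xs = Some (med a
                  (max (max (min c (hd xs)) (med (Min (set xs)) (min c d) (Max (set xs))))
                       (min d (last xs))) b))))"
  (is "(?i \<longleftrightarrow> ?ii) \<and> (?ii \<longleftrightarrow> ?iii)")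
proof -
  have i_iii: ?iii if i: ?i
  proof -
    obtain a b c d where "a \<le> min c d" "max c d \<le> b"
      "\<And>xs. xs \<noteq> [] \<Longrightarrow> H xs = Some (med_op a b c d xs)"
      by (rule med_op_representation[OF assms]) (use i in \<open>simp_all add: full_SetCompr_eq\<close>)
    then show ?iii
      unfolding all_length_ge_1_iff med_op_def[symmetric] by blast
  qed
  have iii_ii: ?ii if iii: ?iii
  proof -
    obtain a b c d where bounds: "a \<le> min c d" "max c d \<le> b"
      and "\<forall>xs. xs \<noteq> [] \<longrightarrow> H xs = Some (med_op a b c d xs)"
      using iii unfolding all_length_ge_1_iff med_op_def[symmetric] by blast
    then show ?ii
      using med_op_operation_properties[OF assms bounds] by blast
  qed
  have ii_i: ?i if ii: ?ii
  proof -
    from ii have "chain_convex {the (H (ys @ [x] @ zs)) | x. True}" for ys zs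
      by blast
    from this[of "[]" "[]"] this[of "[]" "[_]"] this[of "[_]" "[]"] ii show ?i
      using range_idempotent_square[OF assms] by simp
  qed
  from i_iii iii_ii ii_i show ?thesis
    by blast
qed

end
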